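(* Let $\nu$ be a Borel probability measure on $\mathbb{R}^d$. Assume that $r>0$ and $\lambda_1,\dots,\lambda_d,M\ge1$. Then $$\nu\big(\{x:\ \nu(D(x,\lambda_1r,\dots,\lambda_dr))\ge M\,\nu(D(x,r))\}\big)\le 4^dM^{-1}\lambda_1\cdots\lambda_d.$$
   Context: For $x\in\mathbb{R}^d$ and $h_1,\dots,h_d\ge0$, $D(x,h_1,\dots,h_d)=\prod_{i=1}^d[x_i-h_i,x_i+h_i]$, and $D(x,r)=D(x,r,\dots,r)$. *)

theory Defs
  imports "HOL-Probability.Probability"
begin

definition Dbox :: "real^'n \<Rightarrow> ('n \<Rightarrow> real) \<Rightarrow> (real^'n) set" where
  "Dbox x h = {y. \<forall>i. x$i - h i \<le> y$i \<and> y$i \<le> x$i + h i}"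

end

theory Submission
  imports Defs
begin

text \<open>Cut \<open>\<real>\<^sup>d\<close> into the half-open cubes of side \<open>r\<close>. In every cube \<open>Q\<close> that meets the
  exceptional set \<open>A\<close> pick a point \<open>a\<close> of \<open>A \<inter> Q\<close>; then \<open>Q \<subseteq> D(a,r)\<close>, so
  \<open>\<nu>(A \<inter> Q) \<le> \<nu>(D(a,r)) \<le> M\<^sup>-\<^sup>1 \<nu>(D(a,\<lambda>\<^sub>1r,\<dots>,\<lambda>\<^sub>dr))\<close>. Summing over the cubes, it remains
  to note that a point lies in at most \<open>\<Prod>\<^sub>i (2\<lambda>\<^sub>i + 2) \<le> 4\<^sup>d \<lambda>\<^sub>1\<cdots>\<lambda>\<^sub>d\<close> of the enlarged boxes,
  since a box of half-width \<open>\<lambda>\<^sub>ir\<close> meets at most \<open>2\<lambda>\<^sub>i + 2\<close> grid intervals in direction \<open>i\<close>.\<close>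

lemma Dbox_closed: "closed (Dbox x h)"
proof -
  have "Dbox x h = (\<Inter>i. {y. x$i - h i \<le> y$i} \<inter> {y. y$i \<le> x$i + h i})"
    unfolding Dbox_def by auto
  then show ?thesis
    by (auto intro!: closed_INT closed_Int closed_Collect_le continuous_intros)
qed

lemma Dbox_in_borel: "Dbox x h \<in> sets borel"
  by (simp add: Dbox_closed borel_closed)

definition grid_cell :: "real \<Rightarrow> ('n \<Rightarrow> int) \<Rightarrow> (real^'n) set" where
  "grid_cell r k = {y. \<forall>i. of_int (k i) * r \<le> y$i \<and> y$i < (of_int (k i) + 1) * r}"

lemma grid_cell_in_borel: "grid_cell r k \<in> sets borel"
proof -
  have "grid_cell r k = (\<Inter>i. {y. of_int (k i) * r \<le> y$i} \<inter> {y. y$i < (of_int (k i) + 1) * r})"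
    unfolding grid_cell_def by auto
  then show ?thesis
    by (auto intro!: sets.countable_INT' sets.Int borel_closed borel_open
        closed_Collect_le open_Collect_less continuous_intros)
qed

lemma mem_grid_cell_iff_floor:
  assumes "r > 0" shows "x \<in> grid_cell r k \<longleftrightarrow> k = (\<lambda>i. \<lfloor>x$i / r\<rfloor>)"
proof -
  have "of_int (k i) * r \<le> x$i \<and> x$i < (of_int (k i) + 1) * r \<longleftrightarrow> \<lfloor>x$i / r\<rfloor> = k i" for i
    using assms by (simp add: floor_eq_iff le_divide_eq divide_less_eq)
  then show ?thesis by (auto simp: grid_cell_def fun_eq_iff)
qed

lemma disjoint_family_grid_cell:
  assumes "r > 0" shows "disjoint_family (grid_cell r)"
  using assms by (auto simp: disjoint_family_on_def mem_grid_cell_iff_floor)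

lemma grid_cell_subset_Dbox:
  assumes "a \<in> grid_cell r k" shows "grid_cell r k \<subseteq> Dbox a (\<lambda>_. r)"
proof
  fix y assume y: "y \<in> grid_cell r k"
  have "\<bar>y$i - a$i\<bar> \<le> r" for i
  proof -
    have "of_int (k i) * r \<le> y$i" "y$i < of_int (k i) * r + r"
      and "of_int (k i) * r \<le> a$i" "a$i < of_int (k i) * r + r"
      using y assms by (auto simp: grid_cell_def distrib_right)
    then show ?thesis by linarith
  qed
  then show "y \<in> Dbox a (\<lambda>_. r)" by (auto simp: Dbox_def abs_le_iff algebra_simps)
qed

lemma grid_index_near_Dbox:
  assumes "r > 0" "a \<in> grid_cell r k" "z \<in> Dbox a h"
  shows "k i \<in> {\<lfloor>(z$i - h i) / r\<rfloor> .. \<lfloor>(z$i + h i) / r\<rfloor>}"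
proof -
  have a: "of_int (k i) * r \<le> a$i" "a$i < (of_int (k i) + 1) * r"
    using assms(2) by (auto simp: grid_cell_def)
  have z: "a$i - h i \<le> z$i" "z$i \<le> a$i + h i"
    using assms(3) by (auto simp: Dbox_def)
  have "(z$i - h i) / r < of_int (k i) + 1" using a z assms(1) by (simp add: divide_less_eq)
  moreover have "of_int (k i) \<le> (z$i + h i) / r" using a z assms(1) by (simp add: le_divide_eq)
  ultimately show ?thesis by (simp add: le_floor_iff floor_le_iff)
qed

lemma card_floor_interval_le:
  fixes u v :: real assumes "u \<le> v"
  shows "real (card {\<lfloor>u\<rfloor> .. \<lfloor>v\<rfloor>}) \<le> v - u + 2"
proof -
  have "\<lfloor>u\<rfloor> \<le> \<lfloor>v\<rfloor>" using assms by (rule floor_mono)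
  then have "real (card {\<lfloor>u\<rfloor> .. \<lfloor>v\<rfloor>}) = of_int (\<lfloor>v\<rfloor> - \<lfloor>u\<rfloor> + 1)" by simp
  also have "\<dots> \<le> v - u + 2"
    unfolding of_int_add of_int_diff of_int_1
    using of_int_floor_le[of v] real_of_int_floor_add_one_gt[of u] by linarith
  finally show ?thesis .
qed

lemma grid_cells_near_point:
  fixes z :: "real^'n"
  assumes "r > 0" "\<And>i. h i \<ge> 0"
  defines "K \<equiv> {k. \<exists>a \<in> grid_cell r k. z \<in> Dbox a h}"
  shows "finite K" "real (card K) \<le> (\<Prod>i\<in>UNIV. 2 * h i / r + 2)"
proof -
  define T where "T i = {\<lfloor>(z$i - h i) / r\<rfloor> .. \<lfloor>(z$i + h i) / r\<rfloor>}" for i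
  have sub: "K \<subseteq> PiE UNIV T"
  proof
    fix k assume "k \<in> K"
    then obtain a where "a \<in> grid_cell r k" "z \<in> Dbox a h" by (auto simp: K_def)
    then have "k i \<in> T i" for i unfolding T_def by (rule grid_index_near_Dbox[OF assms(1)])
    then show "k \<in> PiE UNIV T" by auto
  qed
  have fin: "finite (PiE UNIV T)" by (simp add: T_def finite_PiE)
  show "finite K" using sub fin by (rule finite_subset)
  have "real (card K) \<le> real (card (PiE UNIV T))" using card_mono[OF fin sub] by simp
  also have "\<dots> = (\<Prod>i\<in>UNIV. real (card (T i)))" by (simp add: card_PiE)
  also have "\<dots> \<le> (\<Prod>i\<in>UNIV. 2 * h i / r + 2)"
  proof (rule prod_mono)
    fix i
    have "(z$i - h i) / r \<le> (z$i + h i) / r" using assms by (simp add: divide_right_mono)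
    then have "real (card (T i)) \<le> (z$i + h i) / r - (z$i - h i) / r + 2"
      unfolding T_def by (rule card_floor_interval_le)
    then show "0 \<le> real (card (T i)) \<and> real (card (T i)) \<le> 2 * h i / r + 2"
      by (simp add: diff_divide_distrib[symmetric])
  qed
  finally show "real (card K) \<le> (\<Prod>i\<in>UNIV. 2 * h i / r + 2)" .
qed

lemma emeasure_grid_cells_near_point_le:
  fixes z :: "real^'n"
  assumes "r > 0" "\<And>i. lam i \<ge> 1"
  shows "emeasure (count_space UNIV) {k. \<exists>a \<in> grid_cell r k. z \<in> Dbox a (\<lambda>i. lam i * r)}
           \<le> ennreal (4 ^ CARD('n) * (\<Prod>i\<in>UNIV. lam i))"
proof -
  let ?K = "{k. \<exists>a \<in> grid_cell r k. z \<in> Dbox a (\<lambda>i. lam i * r)}"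
  have lam_nonneg: "lam i \<ge> 0" for i using assms(2)[of i] by linarith
  have fin: "finite ?K" using assms(1) lam_nonneg by (intro grid_cells_near_point) simp_all
  have "real (card ?K) \<le> (\<Prod>i\<in>UNIV. 2 * (lam i * r) / r + 2)"
    using assms lam_nonneg by (intro grid_cells_near_point) simp_all
  also have "\<dots> \<le> (\<Prod>i\<in>UNIV. 4 * lam i)"
    using assms by (intro prod_mono) (auto intro: add_nonneg_nonneg simp: lam_nonneg)
  also have "\<dots> = 4 ^ CARD('n) * (\<Prod>i\<in>UNIV. lam i)"
    by (simp add: prod.distrib)
  finally have "ennreal (real (card ?K)) \<le> ennreal (4 ^ CARD('n) * (\<Prod>i\<in>UNIV. lam i))"
    by (rule ennreal_leI)
  with fin show ?thesis by (simp add: emeasure_count_space_finite ennreal_of_nat_eq_real_of_nat)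
qed

lemma nn_integral_emeasure_bounded_overlap:
  fixes B :: "'k::countable \<Rightarrow> 'a set" and C :: ennreal
  assumes "\<And>k. B k \<in> sets M"
    and "\<And>z. z \<in> space M \<Longrightarrow> emeasure (count_space UNIV) {k. z \<in> B k} \<le> C"
  shows "(\<integral>\<^sup>+k. emeasure M (B k) \<partial>count_space UNIV) \<le> C * emeasure M (space M)"
proof -
  have count: "(\<integral>\<^sup>+k. indicator (B k) z \<partial>count_space UNIV)
      = emeasure (count_space UNIV) {k. z \<in> B k}" for z
    using nn_integral_indicator[of "{k. z \<in> B k}" "count_space UNIV"] by (simp add: indicator_def)
  have "(\<integral>\<^sup>+k. emeasure M (B k) \<partial>count_space UNIV)
      = (\<integral>\<^sup>+k. \<integral>\<^sup>+z. indicator (B k) z \<partial>M \<partial>count_space UNIV)"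
    using assms(1) by simp
  also have "\<dots> = (\<integral>\<^sup>+z. \<integral>\<^sup>+k. indicator (B k) z \<partial>count_space UNIV \<partial>M)"
    using assms(1) by (intro nn_integral_count_space_nn_integral[symmetric]) simp_all
  also have "\<dots> = (\<integral>\<^sup>+z. emeasure (count_space UNIV) {k. z \<in> B k} \<partial>M)"
    by (simp only: count)
  also have "\<dots> \<le> (\<integral>\<^sup>+z. C \<partial>M)"
    using assms(2) by (intro nn_integral_mono) simp
  finally show ?thesis by simp
qed

lemma emeasure_le_bounded_overlap_cover:
  fixes Q B :: "'k::countable \<Rightarrow> 'a set" and c C :: ennreal
  assumes "A \<in> sets M" "\<And>k. Q k \<in> sets M" "disjoint_family Q" "A \<subseteq> (\<Union>k. Q k)"
    and "\<And>k. emeasure M (A \<inter> Q k) \<le> c * emeasure M (B k)"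
    and "\<And>k. B k \<in> sets M"
    and "\<And>z. z \<in> space M \<Longrightarrow> emeasure (count_space UNIV) {k. z \<in> B k} \<le> C"
  shows "emeasure M A \<le> c * C * emeasure M (space M)"
proof -
  have "A = (\<Union>k. A \<inter> Q k)" using assms(4) by blast
  then have "emeasure M A = emeasure M (\<Union>k. A \<inter> Q k)" by simp
  also have "\<dots> = (\<integral>\<^sup>+k. emeasure M (A \<inter> Q k) \<partial>count_space UNIV)"
    using assms(1-3) by (intro emeasure_UN_countable) (auto simp: disjoint_family_on_def)
  also have "\<dots> \<le> (\<integral>\<^sup>+k. c * emeasure M (B k) \<partial>count_space UNIV)"
    using assms(5) by (intro nn_integral_mono)
  also have "\<dots> = c * (\<integral>\<^sup>+k. emeasure M (B k) \<partial>count_space UNIV)"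
    by (rule nn_integral_cmult) simp
  also have "\<dots> \<le> c * (C * emeasure M (space M))"
    using nn_integral_emeasure_bounded_overlap[OF assms(6,7)] by (simp add: mult_left_mono)
  finally show ?thesis by (simp add: mult.assoc)
qed

lemma measure_Dbox_ratio_ge_le:
  fixes \<nu> :: "(real^'n) measure"
  assumes "finite_measure \<nu>" "sets \<nu> = sets borel" "r > 0" "\<And>i. lam i \<ge> 1" "M > 0"
    and "A \<in> sets \<nu>"
    and "\<And>x. x \<in> A \<Longrightarrow> M * measure \<nu> (Dbox x (\<lambda>_. r)) \<le> measure \<nu> (Dbox x (\<lambda>i. lam i * r))"
  shows "M * measure \<nu> A \<le> 4 ^ CARD('n) * (\<Prod>i\<in>UNIV. lam i) * measure \<nu> (space \<nu>)"
proof -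
  interpret finite_measure \<nu> by fact
  define C :: real where "C = 4 ^ CARD('n) * (\<Prod>i\<in>UNIV. lam i)"
  have "lam i \<ge> 0" for i using assms(4)[of i] by linarith
  then have "C \<ge> 0" by (simp add: C_def prod_nonneg)
  have sets_Dbox: "Dbox x h \<in> sets \<nu>" for x h using assms(2) Dbox_in_borel by simp
  define a where "a k = (SOME x. x \<in> A \<inter> grid_cell r k)" for k
  define B where "B k = (if A \<inter> grid_cell r k = {} then {} else Dbox (a k) (\<lambda>i. lam i * r))" for k
  have a_mem: "a k \<in> A \<inter> grid_cell r k" if "A \<inter> grid_cell r k \<noteq> {}" for k
    using that unfolding a_def by (rule some_in_eq[THEN iffD2])
  have "emeasure \<nu> A \<le> ennreal (1 / M) * ennreal C * emeasure \<nu> (space \<nu>)"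
  proof (rule emeasure_le_bounded_overlap_cover[where Q = "grid_cell r"])
    show "A \<subseteq> (\<Union>k. grid_cell r k)" using mem_grid_cell_iff_floor[OF assms(3)] by blast
    show "emeasure \<nu> (A \<inter> grid_cell r k) \<le> ennreal (1 / M) * emeasure \<nu> (B k)" for k
    proof (cases "A \<inter> grid_cell r k = {}")
      case False
      then have ak: "a k \<in> A \<inter> grid_cell r k" by (rule a_mem)
      have "measure \<nu> (A \<inter> grid_cell r k) \<le> measure \<nu> (Dbox (a k) (\<lambda>_. r))"
        using grid_cell_subset_Dbox[of "a k"] ak by (intro finite_measure_mono sets_Dbox) auto
      also have "\<dots> \<le> 1 / M * measure \<nu> (B k)"
        using assms(5) assms(7)[of "a k"] ak False by (simp add: B_def field_simps)
      finally show ?thesis using assms(5)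
        by (simp add: emeasure_eq_measure ennreal_leI ennreal_mult[symmetric])
    qed simp
    show "emeasure (count_space UNIV) {k. z \<in> B k} \<le> ennreal C" for z
    proof -
      have "{k. z \<in> B k} \<subseteq> {k. \<exists>a \<in> grid_cell r k. z \<in> Dbox a (\<lambda>i. lam i * r)}"
        using a_mem by (auto simp: B_def split: if_splits)
      then show ?thesis unfolding C_def
        by (rule order.trans[OF emeasure_mono emeasure_grid_cells_near_point_le[OF assms(3,4)]]) simp
    qed
  qed (use assms(2,3,6) sets_Dbox grid_cell_in_borel disjoint_family_grid_cell in \<open>auto simp: B_def\<close>)
  then have "measure \<nu> A \<le> 1 / M * C * measure \<nu> (space \<nu>)"
    using \<open>C \<ge> 0\<close> assms(5) by (simp add: emeasure_eq_measure ennreal_mult[symmetric])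
  then show ?thesis using assms(5) by (simp add: C_def field_simps)
qed

theorem lemma4p2:
  fixes \<nu> :: "(real^'n) measure" and r M :: real and lam :: "'n \<Rightarrow> real"
  assumes "prob_space \<nu>" and "sets \<nu> = sets borel"
    and "r > 0" and "\<And>i. lam i \<ge> 1" and "M \<ge> 1"
  shows "measure \<nu> {x. measure \<nu> (Dbox x (\<lambda>i. lam i * r)) \<ge> M * measure \<nu> (Dbox x (\<lambda>_. r))}
           \<le> 4 ^ CARD('n) / M * (\<Prod>i\<in>UNIV. lam i)"
proof -
  interpret prob_space \<nu> by fact
  define A where "A = {x. measure \<nu> (Dbox x (\<lambda>i. lam i * r)) \<ge> M * measure \<nu> (Dbox x (\<lambda>_. r))}"
  have "(\<Prod>i\<in>UNIV. lam i) \<ge> 0" using assms(4) by (meson prod_nonneg order_trans zero_le_one)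
  show ?thesis
  proof (cases "A \<in> sets \<nu>")
    case False
    then show ?thesis using \<open>(\<Prod>i\<in>UNIV. lam i) \<ge> 0\<close> assms(5)
      by (simp add: A_def measure_notin_sets)
  next
    case True
    have "M * measure \<nu> A \<le> 4 ^ CARD('n) * (\<Prod>i\<in>UNIV. lam i) * measure \<nu> (space \<nu>)"
      using assms True by (intro measure_Dbox_ratio_ge_le) (auto simp: A_def finite_measure_axioms)
    then show ?thesis using assms(5) by (simp add: A_def prob_space field_simps)
  qed
qed

end
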